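(* Let $a,b,c$ be positive integers. For any non-negative integers $p,m,n$, \[\zeta^\star_p(\{c\}^m,b,\{a\}^n)=\sum_{k=0}^m\sum_{l=0}^n(-1)^{k+l}\zeta_p(\{a\}^l,b,\{c\}^k)\cdot\zeta^\star_p(\{c\}^{m-k})\cdot\zeta^\star_p(\{a\}^{n-l}).\]
   Context: For an integer $p\geq 0$ and positive integers $k_1,\ldots,k_n$, $\zeta_p(k_1,\ldots,k_n)=\sum_{p\geq p_1>\cdots>p_n>0}p_1^{-k_1}\cdots p_n^{-k_n}$ and $\zeta^\star_p(k_1,\ldots,k_n)=\sum_{p\geq p_1\geq\cdots\geq p_n\geq 1}p_1^{-k_1}\cdots p_n^{-k_n}$; empty sums are $0$ and $\zeta_p(\varnothing)=\zeta^\star_p(\varnothing)=1$ for the empty index (also when $p=0$). $\{a\}^m$ denotes $m$ copies of $a$. *)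

theory Defs
  imports Complex_Main
begin

text \<open>Index lists are written k_1,...,k_n with p_1 the largest summation
variable:  zeta_p(k_1,...,k_n) = sum over p >= p_1 > ... > p_n > 0 of prod p_i^(-k_i),
zeta*_p(k_1,...,k_n) = sum over p >= p_1 >= ... >= p_n >= 1. Empty index gives 1.\<close>

fun mzeta :: "nat \<Rightarrow> nat list \<Rightarrow> real" where
  "mzeta p [] = 1"
| "mzeta p (k # ks) = (\<Sum>q=1..p. mzeta (q - 1) ks / real q ^ k)"

fun mzeta_star :: "nat \<Rightarrow> nat list \<Rightarrow> real" where
  "mzeta_star p [] = 1"
| "mzeta_star p (k # ks) = (\<Sum>q=1..p. mzeta_star q ks / real q ^ k)"

end

theory Submission
  imports Defs
begin

text \<open>
  Put w_s(q) = q^(-s). Splitting off the summation variable r attached to b gives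
  zeta*_p({c}^m, b, {a}^n) = sum_r h_m(w_c(r), ..., w_c(p)) r^(-b) h_n(w_a(1), ..., w_a(r)) and
  zeta_p({a}^l, b, {c}^k) = sum_r e_l(w_a(r+1), ..., w_a(p)) r^(-b) e_k(w_c(1), ..., w_c(r-1)),
  where h and e are the complete homogeneous and the elementary symmetric polynomials,
  and zeta*_p({s}^j) = h_j(w_s(1), ..., w_s(p)). For disjoint sets of variables X and Y the
  generating function identity E_X(-t) H_(X \<union> Y)(t) = H_Y(t) reads
  sum_k (-1)^k e_k(X) h_(m-k)(X \<union> Y) = h_m(Y); applied once for each of the two inner sums,
  it turns the right-hand side into the left-hand side term by term in r.
\<close>

lemma sum_triangle_swap:
  fixes g :: "nat \<Rightarrow> nat \<Rightarrow> 'a::comm_monoid_add"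
  shows "(\<Sum>q=lo..p. \<Sum>r=lo..q. g q r) = (\<Sum>r=lo..p. \<Sum>q=r..p. g q r)"
proof -
  have "(\<Sum>q=lo..p. \<Sum>r=lo..q. g q r) = (\<Sum>q=lo..p. \<Sum>r\<in>{r. r \<in> {lo..p} \<and> r \<le> q}. g q r)"
    by (intro sum.cong) auto
  also have "\<dots> = (\<Sum>r=lo..p. \<Sum>q\<in>{q. q \<in> {lo..p} \<and> r \<le> q}. g q r)"
    by (rule sum.swap_restrict) auto
  also have "\<dots> = (\<Sum>r=lo..p. \<Sum>q=r..p. g q r)"
    by (intro sum.cong) auto
  finally show ?thesis .
qed

lemma sum_strict_triangle_swap:
  fixes g :: "nat \<Rightarrow> nat \<Rightarrow> 'a::comm_monoid_add"
  shows "(\<Sum>q=lo..p. \<Sum>r=lo..<q. g q r) = (\<Sum>r=lo..p. \<Sum>q=Suc r..p. g q r)"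
proof -
  have "(\<Sum>q=lo..p. \<Sum>r=lo..<q. g q r) = (\<Sum>q=lo..p. \<Sum>r\<in>{r. r \<in> {lo..p} \<and> r < q}. g q r)"
    by (intro sum.cong) auto
  also have "\<dots> = (\<Sum>r=lo..p. \<Sum>q\<in>{q. q \<in> {lo..p} \<and> r < q}. g q r)"
    by (rule sum.swap_restrict) auto
  also have "\<dots> = (\<Sum>r=lo..p. \<Sum>q=Suc r..p. g q r)"
    by (intro sum.cong) auto
  finally show ?thesis .
qed

text \<open>
  complete_sym x lo p m and elem_sym x lo p m are the complete homogeneous and the elementary
  symmetric polynomials of degree m in x lo, ..., x p. The recursion of elem_sym through q - 1
  is only correct for lo \<ge> 1.
\<close>

fun complete_sym :: "(nat \<Rightarrow> 'a::comm_ring_1) \<Rightarrow> nat \<Rightarrow> nat \<Rightarrow> nat \<Rightarrow> 'a" where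
  "complete_sym x lo p 0 = 1"
| "complete_sym x lo p (Suc m) = (\<Sum>q=lo..p. x q * complete_sym x lo q m)"

fun elem_sym :: "(nat \<Rightarrow> 'a::comm_ring_1) \<Rightarrow> nat \<Rightarrow> nat \<Rightarrow> nat \<Rightarrow> 'a" where
  "elem_sym x lo p 0 = 1"
| "elem_sym x lo p (Suc m) = (\<Sum>q=lo..p. x q * elem_sym x lo (q - 1) m)"

lemma complete_sym_Suc_lower:
  assumes "lo \<le> p"
  shows "complete_sym x lo p (Suc m) = complete_sym x (Suc lo) p (Suc m) + x lo * complete_sym x lo p m"
  using assms
proof (induction m arbitrary: p)
  case 0
  then show ?case by (simp add: sum.atLeast_Suc_atMost)
next
  case (Suc m)
  let ?h = "complete_sym x"
  have "?h lo p (Suc (Suc m)) = x lo * ?h lo lo (Suc m) + (\<Sum>q=Suc lo..p. x q * ?h lo q (Suc m))"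
    using Suc.prems by (simp only: complete_sym.simps(2) sum.atLeast_Suc_atMost)
  also have "?h lo lo (Suc m) = x lo * ?h lo lo m"
    by simp
  also have "(\<Sum>q=Suc lo..p. x q * ?h lo q (Suc m)) =
      (\<Sum>q=Suc lo..p. x q * ?h (Suc lo) q (Suc m) + x lo * (x q * ?h lo q m))"
    by (rule sum.cong) (auto simp: Suc.IH algebra_simps simp del: complete_sym.simps(2))
  also have "x lo * (x lo * ?h lo lo m) + \<dots> = ?h (Suc lo) p (Suc (Suc m)) +
      x lo * (x lo * ?h lo lo m + (\<Sum>q=Suc lo..p. x q * ?h lo q m))"
    unfolding complete_sym.simps(2)[of x "Suc lo" p]
    by (simp add: sum.distrib sum_distrib_left algebra_simps del: complete_sym.simps(2))
  also have "x lo * ?h lo lo m + (\<Sum>q=Suc lo..p. x q * ?h lo q m) = ?h lo p (Suc m)"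
    using Suc.prems by (simp add: sum.atLeast_Suc_atMost)
  finally show ?case .
qed

lemma elem_sym_Suc_lower:
  assumes "1 \<le> lo" and "lo \<le> p"
  shows "elem_sym x lo p (Suc m) = elem_sym x (Suc lo) p (Suc m) + x lo * elem_sym x (Suc lo) p m"
  using assms(2)
proof (induction m arbitrary: p)
  case 0
  then show ?case by (simp add: sum.atLeast_Suc_atMost)
next
  case (Suc m)
  let ?e = "elem_sym x"
  have "?e lo p (Suc (Suc m)) =
      x lo * ?e lo (lo - 1) (Suc m) + (\<Sum>q=Suc lo..p. x q * ?e lo (q - 1) (Suc m))"
    using Suc.prems by (simp only: elem_sym.simps(2) sum.atLeast_Suc_atMost)
  also have "x lo * ?e lo (lo - 1) (Suc m) = 0"
    using assms(1) by simp
  also have "0 + (\<Sum>q=Suc lo..p. x q * ?e lo (q - 1) (Suc m)) =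
      (\<Sum>q=Suc lo..p. x q * ?e (Suc lo) (q - 1) (Suc m) + x lo * (x q * ?e (Suc lo) (q - 1) m))"
    using assms(1)
    by (auto simp: Suc.IH algebra_simps simp del: elem_sym.simps(2) intro!: sum.cong)
  also have "\<dots> = ?e (Suc lo) p (Suc (Suc m)) + x lo * ?e (Suc lo) p (Suc m)"
    unfolding elem_sym.simps(2)[of x "Suc lo" p]
    by (simp add: sum.distrib sum_distrib_left algebra_simps del: elem_sym.simps(2))
  finally show ?case .
qed

text \<open>In generating functions: E'(t) = (1 + y t) E(t).\<close>

lemma alternating_convolution_Suc:
  fixes E E' H :: "nat \<Rightarrow> 'a::comm_ring_1"
  assumes "E' 0 = E 0" and "\<And>k. E' (Suc k) = E (Suc k) + y * E k"
  shows "(\<Sum>k\<le>Suc m. (-1)^k * E' k * H (Suc m - k)) =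
    (\<Sum>k\<le>Suc m. (-1)^k * E k * H (Suc m - k)) - y * (\<Sum>k\<le>m. (-1)^k * E k * H (m - k))"
  by (simp only: sum.atMost_Suc_shift assms)
     (simp add: sum.distrib sum_subtractf sum_negf sum_distrib_left algebra_simps)

lemma alternating_convolution_elem_sym_empty:
  assumes "p < lo"
  shows "(\<Sum>k\<le>m. (-1)^k * elem_sym x lo p k * H (m - k)) = H m"
proof -
  have "elem_sym x lo p (Suc k) = 0" for k
    using assms by simp
  then show ?thesis
    by (simp add: sum.atMost_shift)
qed

lemma complete_sym_drop_lower:
  assumes "d \<le> p"
  shows "(\<Sum>k\<le>m. (-1)^k * elem_sym x 1 d k * complete_sym x 1 p (m - k)) = complete_sym x (Suc d) p m"
  using assms
proof (induction d arbitrary: m)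
  case 0
  then show ?case by (simp add: alternating_convolution_elem_sym_empty)
next
  case (Suc d)
  show ?case
  proof (cases m)
    case 0
    then show ?thesis by simp
  next
    case (Suc m')
    have "(\<Sum>k\<le>Suc m'. (-1)^k * elem_sym x 1 (Suc d) k * complete_sym x 1 p (Suc m' - k)) =
      (\<Sum>k\<le>Suc m'. (-1)^k * elem_sym x 1 d k * complete_sym x 1 p (Suc m' - k)) -
      x (Suc d) * (\<Sum>k\<le>m'. (-1)^k * elem_sym x 1 d k * complete_sym x 1 p (m' - k))"
      by (rule alternating_convolution_Suc) simp_all
    also have "\<dots> = complete_sym x (Suc d) p (Suc m') - x (Suc d) * complete_sym x (Suc d) p m'"
      using Suc.IH Suc.prems by simp
    also have "\<dots> = complete_sym x (Suc (Suc d)) p (Suc m')"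
      using complete_sym_Suc_lower[of "Suc d" p x m'] Suc.prems by simp
    finally show ?thesis
      using Suc by simp
  qed
qed

lemma complete_sym_drop_upper:
  assumes "r \<le> p"
  shows "(\<Sum>l\<le>n. (-1)^l * elem_sym x (Suc r) p l * complete_sym x 1 p (n - l)) = complete_sym x 1 r n"
  using assms
proof (induction r arbitrary: n rule: inc_induct)
  case base
  then show ?case by (simp add: alternating_convolution_elem_sym_empty)
next
  case (step r)
  show ?case
  proof (cases n)
    case 0
    then show ?thesis by simp
  next
    case (Suc n')
    have "(\<Sum>l\<le>Suc n'. (-1)^l * elem_sym x (Suc r) p l * complete_sym x 1 p (Suc n' - l)) =
      (\<Sum>l\<le>Suc n'. (-1)^l * elem_sym x (Suc (Suc r)) p l * complete_sym x 1 p (Suc n' - l)) -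
      x (Suc r) * (\<Sum>l\<le>n'. (-1)^l * elem_sym x (Suc (Suc r)) p l * complete_sym x 1 p (n' - l))"
      by (rule alternating_convolution_Suc)
         (use step in \<open>simp_all add: elem_sym_Suc_lower del: elem_sym.simps(2)\<close>)
    also have "\<dots> = complete_sym x 1 (Suc r) (Suc n') - x (Suc r) * complete_sym x 1 (Suc r) n'"
      using step.IH by simp
    also have "\<dots> = complete_sym x 1 r (Suc n')"
      by simp
    finally show ?thesis
      using Suc by simp
  qed
qed

lemma mzeta_star_replicate:
  "mzeta_star p (replicate m c) = complete_sym (\<lambda>q. 1 / real q ^ c) 1 p m"
  by (induction m arbitrary: p) auto

lemma mzeta_replicate:
  "mzeta p (replicate m c) = elem_sym (\<lambda>q. 1 / real q ^ c) 1 p m"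
  by (induction m arbitrary: p) auto

lemma mzeta_star_replicate_Cons:
  "mzeta_star p (replicate m c @ b # ks) =
    (\<Sum>r=1..p. complete_sym (\<lambda>q. 1 / real q ^ c) r p m * (mzeta_star r ks / real r ^ b))"
proof (induction m arbitrary: p)
  case 0
  then show ?case by simp
next
  case (Suc m)
  let ?w = "\<lambda>q. 1 / real q ^ c"
  let ?f = "\<lambda>r. mzeta_star r ks / real r ^ b"
  have "mzeta_star p (replicate (Suc m) c @ b # ks) =
      (\<Sum>q=1..p. \<Sum>r=1..q. ?w q * (complete_sym ?w r q m * ?f r))"
    using Suc by (simp add: sum_distrib_left divide_inverse mult.commute)
  also have "\<dots> = (\<Sum>r=1..p. \<Sum>q=r..p. ?w q * (complete_sym ?w r q m * ?f r))"
    by (rule sum_triangle_swap)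
  also have "\<dots> = (\<Sum>r=1..p. complete_sym ?w r p (Suc m) * ?f r)"
    by (simp add: sum_distrib_right sum_divide_distrib mult.assoc)
  finally show ?case .
qed

lemma mzeta_replicate_Cons:
  "mzeta p (replicate l a @ b # ks) =
    (\<Sum>r=1..p. elem_sym (\<lambda>q. 1 / real q ^ a) (Suc r) p l * (mzeta (r - 1) ks / real r ^ b))"
proof (induction l arbitrary: p)
  case 0
  then show ?case by simp
next
  case (Suc l)
  let ?w = "\<lambda>q. 1 / real q ^ a"
  let ?f = "\<lambda>r. mzeta (r - 1) ks / real r ^ b"
  have "mzeta p (replicate (Suc l) a @ b # ks) =
      (\<Sum>q=1..p. \<Sum>r=1..q-1. ?w q * (elem_sym ?w (Suc r) (q - 1) l * ?f r))"
    using Suc by (simp add: sum_distrib_left divide_inverse mult.commute)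
  also have "\<dots> = (\<Sum>q=1..p. \<Sum>r=1..<q. ?w q * (elem_sym ?w (Suc r) (q - 1) l * ?f r))"
    by (intro sum.cong) (auto simp: atLeastLessThanSuc_atLeastAtMost[symmetric])
  also have "\<dots> = (\<Sum>r=1..p. \<Sum>q=Suc r..p. ?w q * (elem_sym ?w (Suc r) (q - 1) l * ?f r))"
    by (rule sum_strict_triangle_swap)
  also have "\<dots> = (\<Sum>r=1..p. elem_sym ?w (Suc r) p (Suc l) * ?f r)"
    by (simp add: sum_distrib_right sum_divide_distrib mult.assoc)
  finally show ?case .
qed

theorem proposition2p2:
  fixes a b c p m n :: nat
  assumes "a > 0" and "b > 0" and "c > 0"
  shows "mzeta_star p (replicate m c @ [b] @ replicate n a) =
    (\<Sum>k=0..m. \<Sum>l=0..n. (-1) ^ (k + l) *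
        mzeta p (replicate l a @ [b] @ replicate k c) *
        mzeta_star p (replicate (m - k) c) *
        mzeta_star p (replicate (n - l) a))"
proof -
  let ?wa = "\<lambda>q. 1 / real q ^ a" and ?wc = "\<lambda>q. 1 / real q ^ c"
  let ?A = "\<lambda>r k. (-1)^k * elem_sym ?wc 1 (r - 1) k * complete_sym ?wc 1 p (m - k)"
  let ?B = "\<lambda>r l. (-1)^l * elem_sym ?wa (Suc r) p l * complete_sym ?wa 1 p (n - l)"
  have "(\<Sum>k=0..m. \<Sum>l=0..n. (-1) ^ (k + l) *
        mzeta p (replicate l a @ [b] @ replicate k c) *
        mzeta_star p (replicate (m - k) c) *
        mzeta_star p (replicate (n - l) a)) = (\<Sum>k\<le>m. \<Sum>l\<le>n. \<Sum>r=1..p. ?A r k * ?B r l / real r ^ b)"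
    unfolding atLeast0AtMost
    by (intro sum.cong refl)
       (simp add: mzeta_replicate_Cons mzeta_replicate mzeta_star_replicate sum_distrib_left
         power_add algebra_simps)
  also have "\<dots> = (\<Sum>r=1..p. (\<Sum>k\<le>m. ?A r k) * (\<Sum>l\<le>n. ?B r l) / real r ^ b)"
    by (simp only: sum.swap[where B = "{1..p}"] sum_product sum_divide_distrib)
  also have "\<dots> = (\<Sum>r=1..p. complete_sym ?wc r p m * (complete_sym ?wa 1 r n / real r ^ b))"
  proof (intro sum.cong refl)
    fix r assume r: "r \<in> {1..p}"
    then have "Suc (r - 1) = r" by simp
    with r show "(\<Sum>k\<le>m. ?A r k) * (\<Sum>l\<le>n. ?B r l) / real r ^ b =
        complete_sym ?wc r p m * (complete_sym ?wa 1 r n / real r ^ b)"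
      using complete_sym_drop_lower[of "r - 1" p ?wc m] complete_sym_drop_upper[of r p ?wa n] by simp
  qed
  also have "\<dots> = mzeta_star p (replicate m c @ [b] @ replicate n a)"
    by (simp add: mzeta_star_replicate_Cons mzeta_star_replicate)
  finally show ?thesis ..
qed

end
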